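(* Let $1<p<\infty$, let $w,\sigma$ be weights, and let $\mathbb S$ be a positive generalized Haar shift. Let $\mathfrak S_p^*$ be the smallest constant with $\|1_Q\mathbb S^*(1_Qw)\|_{L^{p'}(\sigma)}\le\mathfrak S_p^*w(Q)^{1/p'}$ for all dyadic cubes $Q$. Then for every linearization $\mathbb L$ of $\mathbb S_\natural$, every dyadic cube $Q$ and every bounded $g$, \[ \|1_Q\mathbb L^*(1_Qgw)\|_{L^{p'}(\sigma)}\le\mathfrak S_p^*\,w(Q)^{1/p'}\|g\|_\infty; \] that is, $\mathfrak T_p\le\mathfrak S_p^*$, where $\mathfrak T_p$ is the smallest constant for which the displayed inequality holds (with $\mathfrak T_p$ in place of $\mathfrak S_p^*$) for all such $\mathbb L,Q,g$.
   Context: $\mathscr D$: standard dyadic cubes of $\mathbb{R}^d$; $\ell(Q)$ side length. A generalized Haar shift $\mathbb Sf=\sum_{Q\in\mathscr D}\mathbb S_Qf$ has components $\mathbb S_Qf(x)=|Q|^{-1}\int_Qs_Q(x,y)f(y)\,dy$, where $s_Q$ is supported on $Q\times Q$, $\|s_Q\|_\infty\le1$, arising from the standard definition ($\mathbb S_Qf=\sum_{Q',R'}|Q|^{-1}\langle f,h^{Q'}_{R'}\rangle k^{R'}_{Q'}$ over dyadic $Q',R'\subseteq Q$ of side lengths $2^{-m}\ell(Q),2^{-n}\ell(Q)$, with $h^{Q'}_{R'}$, $k^{R'}_{Q'}$ linear combinations of indicators of the dyadic children of $R'$, resp. $Q'$, of sup norm $\le1$, and $\|\mathbb S\|_{L^2\to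 L^2}\le1$). Positive means $s_Q\ge0$ for all $Q$. Adjoint: $\mathbb S^*g(y)=\sum_Q|Q|^{-1}\int_Qs_Q(x,y)g(x)\,dx$. A linearization of $\mathbb S_\natural$ is an operator $\mathbb Lf(x)=e^{i\vartheta(x)}\sum_{Q\in\mathscr D:\epsilon(x)\le\ell(Q)\le\upsilon(x)}\mathbb S_Qf(x)$, with measurable functions $\vartheta$ real-valued and $0<\epsilon(x)<\upsilon(x)$; $\mathbb L^*$ is its formal adjoint. Weights are nonnegative locally integrable functions, $w(E)=\int_Ew$; $p'=p/(p-1)$. *)

theory Defs
  imports "HOL-Analysis.Analysis"
begin

text \<open>Points of R^d are vectors of type real^'n ('n a finite index type, d = CARD('n)).\<close>

definition dcube :: "int \<Rightarrow> ('n::finite \<Rightarrow> int) \<Rightarrow> (real^'n) set" where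
  "dcube k j = {x. \<forall>i. 2 powr k * j i \<le> x$i \<and> x$i < 2 powr k * (j i + 1)}"

definition dyadic :: "(real^'n::finite) set set" where
  "dyadic = {dcube k j | k j. True}"

definition side :: "(real^'n::finite) set \<Rightarrow> real" where
  "side Q = (THE l. \<exists>k j. Q = dcube k j \<and> l = 2 powr k)"

definition children :: "(real^'n::finite) set \<Rightarrow> (real^'n) set set" where
  "children R = {R' \<in> dyadic. R' \<subseteq> R \<and> side R' = side R / 2}"

definition subcubes :: "(real^'n::finite) set \<Rightarrow> nat \<Rightarrow> (real^'n) set set" where
  "subcubes Q m = {Q' \<in> dyadic. Q' \<subseteq> Q \<and> side Q' = side Q / 2 ^ m}"

definition haar_like :: "(real^'n::finite) set \<Rightarrow> (real^'n \<Rightarrow> complex) \<Rightarrow> bool" where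
  "haar_like R h \<longleftrightarrow>
     (\<exists>c. \<forall>y. h y = (\<Sum>R'\<in>children R. c R' * indicator R' y)) \<and> (\<forall>y. norm (h y) \<le> 1)"

definition shift_comp ::
  "((real^'n::finite) set \<Rightarrow> real^'n \<Rightarrow> real^'n \<Rightarrow> real) \<Rightarrow> (real^'n) set
     \<Rightarrow> (real^'n \<Rightarrow> complex) \<Rightarrow> real^'n \<Rightarrow> complex" where
  "shift_comp s Q f x =
     (LINT y:Q|lborel. complex_of_real (s Q x y) * f y) / complex_of_real (measure lborel Q)"

text \<open>Truncated sum over the dyadic cubes Q (containing x) with e \<le> side Q \<le> u
  (a finite sum when e > 0).\<close>
definition shift_trunc ::
  "((real^'n::finite) set \<Rightarrow> real^'n \<Rightarrow> real^'n \<Rightarrow> real) \<Rightarrow> real \<Rightarrow> real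
     \<Rightarrow> (real^'n \<Rightarrow> complex) \<Rightarrow> real^'n \<Rightarrow> complex" where
  "shift_trunc s e u f x =
     (\<Sum>Q\<in>{Q\<in>dyadic. x \<in> Q \<and> e \<le> side Q \<and> side Q \<le> u}. shift_comp s Q f x)"

text \<open>Positive generalized Haar shift, given by its (real, nonnegative) kernels s_Q,
  arising from the standard definition with complexity (m,n), with L^2 bound 1.\<close>
definition positive_haar_shift ::
  "((real^'n::finite) set \<Rightarrow> real^'n \<Rightarrow> real^'n \<Rightarrow> real) \<Rightarrow> bool" where
  "positive_haar_shift s \<longleftrightarrow>
     (\<forall>Q\<in>dyadic. \<forall>x y. 0 \<le> s Q x y \<and> s Q x y \<le> 1) \<and>
     (\<forall>Q\<in>dyadic. \<forall>x y. (x, y) \<notin> Q \<times> Q \<longrightarrow> s Q x y = 0) \<and>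
     (\<exists>m n::nat. \<forall>Q\<in>dyadic. \<exists>H K :: (real^'n) set \<Rightarrow> (real^'n) set \<Rightarrow> real^'n \<Rightarrow> complex.
        (\<forall>Q'\<in>subcubes Q m. \<forall>R'\<in>subcubes Q n. haar_like R' (H Q' R') \<and> haar_like Q' (K Q' R')) \<and>
        (\<forall>x y. complex_of_real (s Q x y) =
           (\<Sum>Q'\<in>subcubes Q m. \<Sum>R'\<in>subcubes Q n. K Q' R' x * H Q' R' y))) \<and>
     (\<forall>e u. 0 < e \<longrightarrow> (\<forall>f::real^'n \<Rightarrow> complex.
        f \<in> borel_measurable lborel \<longrightarrow> integrable lborel (\<lambda>x. (norm (f x))\<^sup>2) \<longrightarrow>
        (\<integral>\<^sup>+ x. ennreal ((norm (shift_trunc s e u f x))\<^sup>2) \<partial>lborel)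
          \<le> (\<integral>\<^sup>+ x. ennreal ((norm (f x))\<^sup>2) \<partial>lborel)))"

text \<open>Adjoint of a positive shift applied to a nonnegative function g, as an
  extended nonnegative real (sum of nonnegative terms):
  S^* g(y) = \<Sum>_Q |Q|^{-1} \<integral>_Q s_Q(x,y) g(x) dx.\<close>
definition pos_shift_adj ::
  "((real^'n::finite) set \<Rightarrow> real^'n \<Rightarrow> real^'n \<Rightarrow> real) \<Rightarrow> (real^'n \<Rightarrow> real) \<Rightarrow> real^'n \<Rightarrow> ennreal" where
  "pos_shift_adj s g y =
     (\<integral>\<^sup>+ Q. (\<integral>\<^sup>+ x\<in>Q. ennreal (s Q x y * g x) \<partial>lborel) / ennreal (measure lborel Q)
        \<partial>count_space dyadic)"

text \<open>Formal adjoint of the linearization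
  L f(x) = e^{i\<theta>(x)} \<Sum>_{Q: \<epsilon>(x) \<le> side Q \<le> \<upsilon>(x)} S_Q f(x):
  L^* h(y) = \<Sum>_Q |Q|^{-1} \<integral>_Q s_Q(x,y) 1[\<epsilon>(x) \<le> side Q \<le> \<upsilon>(x)] e^{i\<theta>(x)} h(x) dx
  (unconditional sum over the dyadic cubes).\<close>
definition lin_adj ::
  "((real^'n::finite) set \<Rightarrow> real^'n \<Rightarrow> real^'n \<Rightarrow> real) \<Rightarrow> (real^'n \<Rightarrow> real) \<Rightarrow> (real^'n \<Rightarrow> real)
     \<Rightarrow> (real^'n \<Rightarrow> real) \<Rightarrow> (real^'n \<Rightarrow> complex) \<Rightarrow> real^'n \<Rightarrow> complex" where
  "lin_adj s \<theta> \<epsilon> \<upsilon> h y =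
     infsum (\<lambda>Q. (LINT x:Q|lborel.
         complex_of_real (s Q x y) * (if \<epsilon> x \<le> side Q \<and> side Q \<le> \<upsilon> x then 1 else 0)
           * cis (\<theta> x) * h x) / complex_of_real (measure lborel Q)) dyadic"

definition enn_powr :: "ennreal \<Rightarrow> real \<Rightarrow> ennreal" where
  "enn_powr a r = (if a = \<infinity> then \<infinity> else ennreal (enn2real a powr r))"

definition wnorm :: "(real^'n::finite \<Rightarrow> real) \<Rightarrow> real \<Rightarrow> (real^'n \<Rightarrow> ennreal) \<Rightarrow> ennreal" where
  "wnorm \<sigma> q F = enn_powr (\<integral>\<^sup>+ y. enn_powr (F y) q * ennreal (\<sigma> y) \<partial>lborel) (1 / q)"

definition weight :: "(real^'n::finite \<Rightarrow> real) \<Rightarrow> bool" where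
  "weight w \<longleftrightarrow> w \<in> borel_measurable lborel \<and> (\<forall>x. 0 \<le> w x) \<and>
     (\<forall>K. compact K \<longrightarrow> set_integrable lborel K w)"

definition wmeas :: "(real^'n::finite \<Rightarrow> real) \<Rightarrow> (real^'n) set \<Rightarrow> real" where
  "wmeas w E = (LINT x:E|lborel. w x)"

end

theory Submission
  imports Defs
begin

(* Positivity of the shift makes the theorem a domination argument.  Let Q be a
   dyadic cube and |g| <= M almost everywhere.  Each term of the formal adjoint
   L^*(1_Q g w)(y) is an average over a dyadic cube R of a function bounded by
   M s_R(x,y) 1_Q(x) w(x): the truncation indicator and the phase e^{i theta(x)}
   have modulus at most 1, while s_R and w are nonnegative.  Since the modulus of
   an unconditional sum is at most the sum of the moduli, this gives the pointwise
   bound |L^*(1_Q g w)| <= M S^*(1_Q w).  The weighted L^{p'}(sigma) norm is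
   monotone and positively homogeneous, so the testing condition for S^* on Q
   yields the claimed bound with constant C M. *)

(* A finite constant can be pulled out of an upper integral; as the integrands
   below are not known to be measurable, the library's nn_integral_cmult does
   not apply, but the inequality holds for arbitrary f. *)
lemma nn_integral_cmult_le:
  fixes c :: ennreal
  assumes "c < \<infinity>"
  shows "(\<integral>\<^sup>+x. c * f x \<partial>M) \<le> c * integral\<^sup>N M f"
proof (cases "c = 0")
  case True then show ?thesis by simp
next
  case False
  have inv_c: "inverse c * c = 1" using False assms
    by (metis divide_ennreal_def ennreal_divide_self infinity_ennreal_def mult.commute)
  show ?thesis unfolding nn_integral_def[of M "\<lambda>x. c * f x"]
  proof (rule SUP_least)
    fix g assume g: "g \<in> {g. simple_function M g \<and> g \<le> (\<lambda>x. c * f x)}"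
    let ?h = "\<lambda>x. inverse c * g x"
    have simple_h: "simple_function M ?h" using g by auto
    have "?h \<le> f"
    proof (rule le_funI)
      fix x
      have "g x \<le> c * f x" using g by (auto simp: le_fun_def)
      then have "inverse c * g x \<le> inverse c * (c * f x)" by (rule mult_left_mono) simp
      also have "\<dots> = f x" using inv_c by (simp add: mult.assoc[symmetric])
      finally show "?h x \<le> f x" .
    qed
    then have "integral\<^sup>S M ?h \<le> integral\<^sup>N M f"
      unfolding nn_integral_def using simple_h by (intro SUP_upper) auto
    moreover have "integral\<^sup>S M g = c * integral\<^sup>S M ?h"
    proof -
      have "integral\<^sup>S M g = integral\<^sup>S M (\<lambda>x. c * ?h x)"
        using inv_c by (simp add: mult.assoc[symmetric] mult.commute[of c])
      also have "\<dots> = c * integral\<^sup>S M ?h" using simple_h by simp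
      finally show ?thesis .
    qed
    ultimately show "integral\<^sup>S M g \<le> c * integral\<^sup>N M f"
      by (simp add: mult_left_mono)
  qed
qed

(* Triangle inequality for unconditional sums, with the sum of moduli taken in
   [0,oo] so that it is meaningful even without absolute summability. *)
lemma norm_infsum_le_nn_integral:
  fixes f :: "'a \<Rightarrow> complex"
  shows "ennreal (norm (infsum f A)) \<le> (\<integral>\<^sup>+x. ennreal (norm (f x)) \<partial>count_space A)"
proof (cases "f summable_on A")
  case False
  then show ?thesis by (simp add: infsum_not_exists)
next
  case True
  then have abs: "(\<lambda>x. norm (f x)) summable_on A"
    using summable_on_iff_abs_summable_on_complex by blast
  have "ennreal (norm (infsum f A)) \<le> ennreal (infsum (\<lambda>x. norm (f x)) A)"
    using norm_infsum_bound[OF abs] by (simp add: ennreal_leI)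
  also have "\<dots> = (SUP F\<in>{F. finite F \<and> F \<subseteq> A}. ennreal (sum (\<lambda>x. norm (f x)) F))"
    by (rule infsum_nonneg_is_SUPREMUM_ennreal[OF abs]) simp
  also have "\<dots> \<le> (\<integral>\<^sup>+x. ennreal (norm (f x)) \<partial>count_space A)"
  proof (rule SUP_least)
    fix F assume F: "F \<in> {F. finite F \<and> F \<subseteq> A}"
    have "ennreal (sum (\<lambda>x. norm (f x)) F) = (\<integral>\<^sup>+x. ennreal (norm (f x)) \<partial>count_space F)"
      using F by (simp add: sum_ennreal nn_integral_count_space_finite)
    also have "\<dots> \<le> (\<integral>\<^sup>+x. ennreal (norm (f x)) \<partial>count_space A)"
      using F unfolding nn_integral_count_space_indicator[of F]
      by (auto simp: nn_integral_count_space_indicator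
          intro!: nn_integral_mono mult_left_mono split: split_indicator)
    finally show "ennreal (sum (\<lambda>x. norm (f x)) F) \<le> (\<integral>\<^sup>+x. ennreal (norm (f x)) \<partial>count_space A)" .
  qed
  finally show ?thesis .
qed

lemma enn_powr_mono: "0 < r \<Longrightarrow> a \<le> b \<Longrightarrow> enn_powr a r \<le> enn_powr b r"
  unfolding enn_powr_def
  by (auto simp: top_unique less_top intro!: ennreal_leI powr_mono2 enn2real_mono)

lemma enn_powr_cmult:
  assumes c: "0 \<le> c" and r: "0 < r"
  shows "enn_powr (ennreal c * a) r = ennreal (c powr r) * enn_powr a r"
proof (cases "a = \<infinity>")
  case True
  then show ?thesis
    using c r by (cases "c = 0") (auto simp: enn_powr_def ennreal_mult_top)
next
  case False
  then obtain a' where "a = ennreal a'" "0 \<le> a'" by (cases a) auto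
  then show ?thesis using c r
    by (simp add: enn_powr_def ennreal_mult[symmetric] powr_mult)
qed

lemma wnorm_le_scaled:
  assumes M: "0 \<le> M" and q: "0 < q" and le: "\<And>y. F y \<le> ennreal M * G y"
  shows "wnorm \<sigma> q F \<le> ennreal M * wnorm \<sigma> q G"
proof -
  let ?I = "\<lambda>H. \<integral>\<^sup>+ y. enn_powr (H y) q * ennreal (\<sigma> y) \<partial>lborel"
  have "?I F \<le> (\<integral>\<^sup>+ y. ennreal (M powr q) * (enn_powr (G y) q * ennreal (\<sigma> y)) \<partial>lborel)"
  proof (rule nn_integral_mono)
    fix y
    have "enn_powr (F y) q \<le> enn_powr (ennreal M * G y) q" by (rule enn_powr_mono[OF q le])
    also have "\<dots> = ennreal (M powr q) * enn_powr (G y) q" by (rule enn_powr_cmult[OF M q])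
    finally show "enn_powr (F y) q * ennreal (\<sigma> y)
        \<le> ennreal (M powr q) * (enn_powr (G y) q * ennreal (\<sigma> y))"
      by (simp add: mult.assoc[symmetric] mult_right_mono)
  qed
  also have "\<dots> \<le> ennreal (M powr q) * ?I G"
    by (rule nn_integral_cmult_le) simp
  finally have integrals: "?I F \<le> ennreal (M powr q) * ?I G" .
  have q': "0 < 1 / q" using q by simp
  have "wnorm \<sigma> q F \<le> enn_powr (ennreal (M powr q) * ?I G) (1/q)"
    unfolding wnorm_def by (rule enn_powr_mono[OF q' integrals])
  also have "\<dots> = ennreal ((M powr q) powr (1/q)) * wnorm \<sigma> q G"
    unfolding wnorm_def by (rule enn_powr_cmult[OF _ q']) simp
  also have "(M powr q) powr (1/q) = M" using M q by (simp add: powr_powr)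
  finally show ?thesis .
qed

lemma norm_average_le:
  fixes F :: "real^'n::finite \<Rightarrow> complex" and h :: "real^'n \<Rightarrow> real"
  assumes ae: "AE x in lborel. norm (F x) \<le> M * h x" and M: "0 \<le> M"
  shows "ennreal (norm ((LINT x:R|lborel. F x) / complex_of_real (measure lborel R)))
     \<le> ennreal M * ((\<integral>\<^sup>+x\<in>R. ennreal (h x) \<partial>lborel) / ennreal (measure lborel R))"
proof (cases "measure lborel R = 0")
  case True then show ?thesis by simp
next
  case False
  then have m: "0 < measure lborel R" using measure_nonneg[of lborel R] by linarith
  have "ennreal (norm (LINT x:R|lborel. F x)) \<le> (\<integral>\<^sup>+x. ennreal (norm (indicator R x *\<^sub>R F x)) \<partial>lborel)"
  proof (cases "integrable lborel (\<lambda>x. indicator R x *\<^sub>R F x)")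
    case True then show ?thesis
      using integral_norm_bound_ennreal[OF True] by (simp add: set_lebesgue_integral_def)
  next
    case False then show ?thesis by (simp add: set_lebesgue_integral_def not_integrable_integral_eq)
  qed
  also have "\<dots> \<le> (\<integral>\<^sup>+x. ennreal M * (ennreal (h x) * indicator R x) \<partial>lborel)"
  proof (rule nn_integral_mono_AE)
    show "AE x in lborel. ennreal (norm (indicator R x *\<^sub>R F x)) \<le> ennreal M * (ennreal (h x) * indicator R x)"
      using ae
    proof eventually_elim
      case (elim x)
      have "ennreal (norm (F x)) \<le> ennreal M * ennreal (h x)"
      proof (cases "0 \<le> h x")
        case True then show ?thesis using M elim by (simp add: ennreal_mult[symmetric] ennreal_leI)
      next
        case False
        then have "M * h x \<le> 0" using M by (simp add: mult_nonneg_nonpos)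
        then have "norm (F x) = 0" using elim by (meson norm_ge_zero order.trans antisym)
        then show ?thesis by simp
      qed
      then show ?case using M by (cases "x \<in> R") auto
    qed
  qed
  also have "\<dots> \<le> ennreal M * (\<integral>\<^sup>+x\<in>R. ennreal (h x) \<partial>lborel)"
    by (rule nn_integral_cmult_le) simp
  finally have integral_le: "ennreal (norm (LINT x:R|lborel. F x))
      \<le> ennreal M * (\<integral>\<^sup>+x\<in>R. ennreal (h x) \<partial>lborel)" .
  have "ennreal (norm ((LINT x:R|lborel. F x) / complex_of_real (measure lborel R)))
      = ennreal (norm (LINT x:R|lborel. F x)) / ennreal (measure lborel R)"
    using m by (simp add: norm_divide divide_ennreal)
  also have "\<dots> \<le> ennreal M * (\<integral>\<^sup>+x\<in>R. ennreal (h x) \<partial>lborel) / ennreal (measure lborel R)"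
    by (rule divide_right_mono_ennreal[OF integral_le])
  also have "\<dots> = ennreal M * ((\<integral>\<^sup>+x\<in>R. ennreal (h x) \<partial>lborel) / ennreal (measure lborel R))"
    by (simp add: ennreal_times_divide)
  finally show ?thesis .
qed

lemma lin_adj_dominated:
  fixes h :: "real^'n::finite \<Rightarrow> complex" and v :: "real^'n \<Rightarrow> real"
  assumes s_nonneg: "\<And>R x y. R \<in> dyadic \<Longrightarrow> 0 \<le> s R x y"
    and h_le: "AE x in lborel. norm (h x) \<le> M * v x" and M: "0 \<le> M"
  shows "ennreal (norm (lin_adj s \<theta> \<epsilon> \<upsilon> h y)) \<le> ennreal M * pos_shift_adj s v y"
proof -
  let ?trunc = "\<lambda>R x. if \<epsilon> x \<le> side R \<and> side R \<le> \<upsilon> x then 1 else 0 :: complex"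
  let ?term = "\<lambda>R. (LINT x:R|lborel. complex_of_real (s R x y) * ?trunc R x * cis (\<theta> x) * h x)
      / complex_of_real (measure lborel R)"
  have term_le: "ennreal (norm (?term R))
      \<le> ennreal M * ((\<integral>\<^sup>+x\<in>R. ennreal (s R x y * v x) \<partial>lborel) / ennreal (measure lborel R))"
    if R: "R \<in> dyadic" for R
  proof (rule norm_average_le[OF _ M])
    show "AE x in lborel. norm (complex_of_real (s R x y) * ?trunc R x * cis (\<theta> x) * h x)
        \<le> M * (s R x y * v x)"
      using h_le
    proof eventually_elim
      case (elim x)
      have s: "0 \<le> s R x y" by (rule s_nonneg[OF R])
      have "norm (complex_of_real (s R x y) * ?trunc R x * cis (\<theta> x) * h x)
          = s R x y * norm (?trunc R x) * norm (h x)"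
        using s by (simp add: norm_mult)
      also have "\<dots> \<le> s R x y * 1 * (M * v x)"
        using s elim by (intro mult_mono) auto
      finally show ?case by (simp add: algebra_simps)
    qed
  qed
  have "ennreal (norm (lin_adj s \<theta> \<epsilon> \<upsilon> h y)) \<le> (\<integral>\<^sup>+R. ennreal (norm (?term R)) \<partial>count_space dyadic)"
    unfolding lin_adj_def by (rule norm_infsum_le_nn_integral)
  also have "\<dots> \<le> (\<integral>\<^sup>+R. ennreal M * ((\<integral>\<^sup>+x\<in>R. ennreal (s R x y * v x) \<partial>lborel)
      / ennreal (measure lborel R)) \<partial>count_space dyadic)"
    using term_le by (intro nn_integral_mono) simp
  also have "\<dots> \<le> ennreal M * pos_shift_adj s v y"
    unfolding pos_shift_adj_def by (rule nn_integral_cmult_le) simp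
  finally show ?thesis .
qed

lemma ae_norm_bound_nonneg:
  fixes g :: "real^'n::finite \<Rightarrow> 'a::real_normed_vector"
  assumes "AE x in lborel. norm (g x) \<le> M"
  shows "0 \<le> M"
proof (rule ccontr)
  assume "\<not> 0 \<le> M"
  then have "AE x in (lborel :: (real^'n) measure). False"
    using assms by (rule_tac eventually_mono) (auto intro: order.trans[OF norm_ge_zero])
  then have "ae_filter (lborel :: (real^'n) measure) = bot" using trivial_limit_def by blast
  then show False by (simp add: ae_filter_eq_bot_iff)
qed

theorem mainTheorem5:
  fixes p :: real and w \<sigma> :: "real^'n::finite \<Rightarrow> real"
    and s :: "(real^'n) set \<Rightarrow> real^'n \<Rightarrow> real^'n \<Rightarrow> real"
    and C :: real
  assumes p: "1 < p"
    and w: "weight w" and \<sigma>: "weight \<sigma>"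
    and S: "positive_haar_shift s"
    and C: "0 \<le> C"
    and testing: "\<forall>Q\<in>dyadic.
       wnorm \<sigma> (p / (p - 1)) (\<lambda>y. indicator Q y * pos_shift_adj s (\<lambda>x. indicator Q x * w x) y)
         \<le> ennreal (C * wmeas w Q powr (1 / (p / (p - 1))))"
  shows "\<forall>(\<theta>::real^'n \<Rightarrow> real) (\<epsilon>::real^'n \<Rightarrow> real) (\<upsilon>::real^'n \<Rightarrow> real) Q (g::real^'n \<Rightarrow> complex) M.
     \<theta> \<in> borel_measurable lborel \<longrightarrow> \<epsilon> \<in> borel_measurable lborel \<longrightarrow> \<upsilon> \<in> borel_measurable lborel \<longrightarrow>
     (\<forall>x. 0 < \<epsilon> x \<and> \<epsilon> x < \<upsilon> x) \<longrightarrow> Q \<in> dyadic \<longrightarrow>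
     g \<in> borel_measurable lborel \<longrightarrow> bounded (range g) \<longrightarrow>
     (AE x in lborel. norm (g x) \<le> M) \<longrightarrow>
     wnorm \<sigma> (p / (p - 1))
        (\<lambda>y. ennreal (norm (indicator Q y * lin_adj s \<theta> \<epsilon> \<upsilon> (\<lambda>x. indicator Q x * g x * complex_of_real (w x)) y)))
       \<le> ennreal (C * wmeas w Q powr (1 / (p / (p - 1))) * M)"
proof (intro allI impI)
  fix \<theta> \<epsilon> \<upsilon> :: "real^'n \<Rightarrow> real" and Q :: "(real^'n) set" and g :: "real^'n \<Rightarrow> complex" and M
  assume Q: "Q \<in> dyadic" and g_le: "AE x in lborel. norm (g x) \<le> M"
  have M: "0 \<le> M" using g_le by (rule ae_norm_bound_nonneg)
  have s_nonneg: "\<And>R x y. R \<in> dyadic \<Longrightarrow> 0 \<le> s R x y"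
    using S unfolding positive_haar_shift_def by blast
  have w_nonneg: "\<And>x. 0 \<le> w x" using w unfolding weight_def by blast
  define q where "q = p / (p - 1)"
  have q: "0 < q" using p unfolding q_def by simp
  let ?Lg = "lin_adj s \<theta> \<epsilon> \<upsilon> (\<lambda>x. indicator Q x * g x * complex_of_real (w x))"
  let ?Sw = "pos_shift_adj s (\<lambda>x. indicator Q x * w x)"
  have integrand_le: "AE x in lborel. norm (indicator Q x * g x * complex_of_real (w x))
      \<le> M * (indicator Q x * w x)"
    using g_le by eventually_elim (auto simp: norm_mult w_nonneg indicator_def mult_right_mono)
  have "ennreal (norm (?Lg y)) \<le> ennreal M * ?Sw y" for y
    by (rule lin_adj_dominated[where s=s, OF s_nonneg integrand_le M])
  then have dominated: "ennreal (norm (indicator Q y * ?Lg y)) \<le> ennreal M * (indicator Q y * ?Sw y)" for y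
    by (cases "y \<in> Q") auto
  have "wnorm \<sigma> q (\<lambda>y. ennreal (norm (indicator Q y * ?Lg y))) \<le> ennreal M * wnorm \<sigma> q (\<lambda>y. indicator Q y * ?Sw y)"
    by (rule wnorm_le_scaled[OF M q dominated])
  also have "\<dots> \<le> ennreal M * ennreal (C * wmeas w Q powr (1 / q))"
    using testing Q unfolding q_def by (intro mult_left_mono) auto
  also have "\<dots> = ennreal (C * wmeas w Q powr (1 / q) * M)"
    using M C by (simp add: ennreal_mult[symmetric] mult.commute)
  finally show "wnorm \<sigma> (p / (p - 1)) (\<lambda>y. ennreal (norm (indicator Q y * ?Lg y)))
       \<le> ennreal (C * wmeas w Q powr (1 / (p / (p - 1))) * M)" unfolding q_def .
qed

end
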